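(* Let $n \ge 2$, $d \in \{1,\dots,n-1\}$, let $\triangle$ be a regular $n$-simplex in $\mathbb{R}^n$, and let $L = (n-d)(-\triangle)$. Then for every $(n-d)$-dimensional linear subspace $\xi$ of $\mathbb{R}^n$, $L_\xi$ contains a translate of $\triangle_\xi$; but for every $c$ with $0 < c < \tfrac{n}{n-d}$, the set $cL$ contains no translate of $\triangle$. (In particular, the constants $\tfrac{n}{n-1}$ in Theorem 5.1 and $\tfrac{n}{n-d}$ in Theorem 6.1 cannot be replaced by smaller constants.)
   Context: For a set $S\subseteq\mathbb{R}^n$ and a linear subspace $\xi$, $S_\xi$ denotes the orthogonal projection of $S$ onto $\xi$. "$A$ contains a translate of $B$" means $B + w \subseteq A$ for some vector $w$. For $c \in \mathbb{R}$, $cS = \{cx : x \in S\}$. *)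

theory Defs
  imports "HOL-Analysis.Analysis"
begin

definition orth_proj :: "'a::euclidean_space set \<Rightarrow> 'a \<Rightarrow> 'a" where
  "orth_proj \<xi> x = (THE p. p \<in> \<xi> \<and> (\<forall>y\<in>\<xi>. (x - p) \<bullet> y = 0))"

definition regular_simplex :: "'a::euclidean_space set \<Rightarrow> bool" where
  "regular_simplex S \<longleftrightarrow>
     (\<exists>V r. finite V \<and> card V = DIM('a) + 1 \<and> r > 0 \<and>
        (\<forall>u\<in>V. \<forall>v\<in>V. u \<noteq> v \<longrightarrow> dist u v = r) \<and> S = convex hull V)"

end

theory Submission
  imports Defs
begin

(* Let T be a regular n-simplex with vertex set V and k = n - d.

   (1) Every projection K = P T onto a k-dimensional subspace satisfies K + w \<subseteq> k(-K) for
       some w. This holds for every polytope of dimension at most k: any k + 1 of the sets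
       p + kK (p a vertex of K) have a common point, since (k + 1) times the average of any
       at most k + 1 vertices lies in the corresponding sets; Helly's theorem inside
       the k-dimensional span then gives a common point y, and K - y \<subseteq> -kK by convexity.
       Since P is linear, P(k(-T)) = k(-P T), which is the first claim.

   (2) If T + w \<subseteq> l(-T) with l > 0 then l \<ge> n. Test the translated vertex u + w against
       the direction u - g (g the centroid): on T the functional (x - g)\<bullet>(u - g) ranges over
       [-r\<^sup>2/(2N), (N-1) r\<^sup>2/(2N)] with N = n + 1 vertices. Summing the resulting
       inequalities over all vertices cancels the translation and yields N - 1 \<le> l.
       With l = c k this excludes every c < n/k. *)

subsection \<open>Orthogonal projection onto a subspace\<close>

lemma orth_proj_unique:
  fixes \<xi> :: "'a::euclidean_space set"
  assumes "subspace \<xi>" "p \<in> \<xi>" "\<forall>y\<in>\<xi>. (x - p) \<bullet> y = 0"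
  shows "orth_proj \<xi> x = p"
  unfolding orth_proj_def
proof (rule the_equality)
  show "p \<in> \<xi> \<and> (\<forall>y\<in>\<xi>. (x - p) \<bullet> y = 0)" using assms by auto
  fix q assume q: "q \<in> \<xi> \<and> (\<forall>y\<in>\<xi>. (x - q) \<bullet> y = 0)"
  then have "p - q \<in> \<xi>" using assms by (simp add: subspace_diff)
  then have "(x - q) \<bullet> (p - q) - (x - p) \<bullet> (p - q) = 0" using q assms by auto
  then have "(p - q) \<bullet> (p - q) = 0" by (simp add: inner_diff_left inner_diff_right algebra_simps)
  then show "q = p" by simp
qed

lemma orth_proj_spec:
  fixes \<xi> :: "'a::euclidean_space set"
  assumes "subspace \<xi>"
  shows "orth_proj \<xi> x \<in> \<xi>" and "\<forall>y\<in>\<xi>. (x - orth_proj \<xi> x) \<bullet> y = 0"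
proof -
  obtain y z where y: "y \<in> span \<xi>" and z: "\<And>w. w \<in> span \<xi> \<Longrightarrow> orthogonal z w"
    and x: "x = y + z"
    using orthogonal_subspace_decomp_exists[of \<xi> x] by metis
  have span: "span \<xi> = \<xi>" using assms by (simp add: span_eq_iff)
  have "y \<in> \<xi>" using y span by simp
  moreover have "\<forall>w\<in>\<xi>. (x - y) \<bullet> w = 0"
    using z x span by (auto simp: orthogonal_def)
  moreover from calculation have "orth_proj \<xi> x = y" by (rule orth_proj_unique[OF assms])
  ultimately show "orth_proj \<xi> x \<in> \<xi>" and "\<forall>y\<in>\<xi>. (x - orth_proj \<xi> x) \<bullet> y = 0"
    by simp_all
qed

lemma orth_proj_linear:
  fixes \<xi> :: "'a::euclidean_space set"
  assumes "subspace \<xi>"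
  shows "linear (orth_proj \<xi>)"
proof (rule linearI)
  note in_\<xi> = orth_proj_spec(1)[OF assms] and orth = orth_proj_spec(2)[OF assms]
  fix x y
  have "(x + y - (orth_proj \<xi> x + orth_proj \<xi> y)) \<bullet> z
          = (x - orth_proj \<xi> x) \<bullet> z + (y - orth_proj \<xi> y) \<bullet> z" for z
    by (simp add: inner_diff_left inner_add_left)
  then show "orth_proj \<xi> (x + y) = orth_proj \<xi> x + orth_proj \<xi> y"
    by (intro orth_proj_unique[OF assms]) (simp_all add: in_\<xi> orth subspace_add[OF assms])
next
  note in_\<xi> = orth_proj_spec(1)[OF assms] and orth = orth_proj_spec(2)[OF assms]
  fix c :: real and x
  have "(c *\<^sub>R x - c *\<^sub>R orth_proj \<xi> x) \<bullet> z = c * ((x - orth_proj \<xi> x) \<bullet> z)" for z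
    by (simp add: scaleR_right_diff_distrib[symmetric])
  then show "orth_proj \<xi> (c *\<^sub>R x) = c *\<^sub>R orth_proj \<xi> x"
    by (intro orth_proj_unique[OF assms]) (simp_all add: in_\<xi> orth subspace_scale[OF assms])
qed

subsection \<open>Helly's theorem in a subspace of dimension at most \<open>k\<close>\<close>

text \<open>Repeated points make the split trivial; otherwise the point set is affinely dependent.\<close>

lemma indexed_Radon:
  fixes X :: "'i \<Rightarrow> 'a::euclidean_space"
  assumes "finite I" "dim (X ` I) \<le> k" "card I \<ge> k + 2"
  obtains A B where "A \<inter> B = {}" "A \<union> B = I"
    "convex hull (X ` A) \<inter> convex hull (X ` B) \<noteq> {}"
proof (cases "inj_on X I")
  case False
  then obtain i j where ij: "i \<in> I" "j \<in> I" "i \<noteq> j" "X i = X j"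
    unfolding inj_on_def by blast
  have "X i \<in> convex hull (X ` {i}) \<inter> convex hull (X ` (I - {i}))"
    using ij by (auto intro!: hull_inc)
  then show ?thesis using that[of "{i}" "I - {i}"] ij(1) by blast
next
  case True
  then have "card (X ` I) = card I" by (rule card_image)
  then have "card (X ` I) \<ge> dim (X ` I) + 2" using assms(2,3) by linarith
  then have "affine_dependent (X ` I)"
    by (rule affine_dependent_biggerset_general[OF finite_imageI[OF assms(1)]])
  with Radon_partition[OF finite_imageI[OF assms(1)]]
  obtain M P where MP: "M \<inter> P = {}" "M \<union> P = X ` I"
    "convex hull M \<inter> convex hull P \<noteq> {}"
    by metis
  define A where "A = {i \<in> I. X i \<in> M}"
  define B where "B = {i \<in> I. X i \<in> P}"
  have "M \<subseteq> X ` I" "P \<subseteq> X ` I" using MP(2) by auto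
  then have "X ` A = M" "X ` B = P" unfolding A_def B_def by auto
  moreover have "A \<inter> B = {}" using MP(1) unfolding A_def B_def by auto
  moreover have "A \<union> B = I" using MP(2) unfolding A_def B_def by auto
  ultimately show ?thesis using that MP(3) by simp
qed

lemma Helly_step:
  fixes \<F> :: "'a::euclidean_space set set"
  assumes fin: "finite \<F>" and card: "card \<F> \<ge> k + 2"
    and sets: "\<forall>S\<in>\<F>. convex S \<and> S \<subseteq> A" and dim: "dim A \<le> k"
    and omit: "\<And>S. S \<in> \<F> \<Longrightarrow> \<Inter>(\<F> - {S}) \<noteq> {}"
  shows "\<Inter>\<F> \<noteq> {}"
proof -
  have "\<forall>S\<in>\<F>. \<exists>x. x \<in> \<Inter>(\<F> - {S})" using omit by blast
  then obtain X where X: "\<And>S. S \<in> \<F> \<Longrightarrow> X S \<in> \<Inter>(\<F> - {S})"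
    by metis
  have "X ` \<F> \<subseteq> A"
  proof
    fix x assume "x \<in> X ` \<F>"
    then obtain S where S: "S \<in> \<F>" "x = X S" by blast
    have "card (\<F> - {S}) > 0" using card S(1) fin by simp
    then have "\<F> - {S} \<noteq> {}" by (metis card_gt_0_iff)
    then show "x \<in> A" using X[OF S(1)] S(2) sets by blast
  qed
  then have "dim (X ` \<F>) \<le> k" using dim_subset dim by (meson order_trans)
  then obtain \<G> \<H> where GH: "\<G> \<inter> \<H> = {}" "\<G> \<union> \<H> = \<F>"
    and p: "convex hull (X ` \<G>) \<inter> convex hull (X ` \<H>) \<noteq> {}"
    using indexed_Radon fin card by metis
  have part_hull: "convex hull (X ` \<P>) \<subseteq> S" if "S \<in> \<F>" "S \<notin> \<P>" "\<P> \<subseteq> \<F>" for S \<P>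
  proof (rule hull_minimal)
    show "X ` \<P> \<subseteq> S" using that X by blast
    show "convex S" using that(1) sets by blast
  qed
  have "convex hull (X ` \<G>) \<inter> convex hull (X ` \<H>) \<subseteq> S" if "S \<in> \<F>" for S
  proof (cases "S \<in> \<G>")
    case True
    then have "S \<notin> \<H>" using GH(1) by blast
    then show ?thesis using part_hull[of S \<H>] that GH(2) by blast
  next
    case False
    then show ?thesis using part_hull[of S \<G>] that GH(2) by blast
  qed
  then have "convex hull (X ` \<G>) \<inter> convex hull (X ` \<H>) \<subseteq> \<Inter>\<F>"
    by blast
  then show ?thesis using p by blast
qed

text \<open>Helly's theorem for finitely many convex sets inside a space of dimension at most \<open>k\<close>
(the library version fixes \<open>k\<close> to the dimension of the ambient type).\<close>

lemma Helly_subspace: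
  fixes \<F> :: "'a::euclidean_space set set"
  assumes "finite \<F>" "\<forall>S\<in>\<F>. convex S \<and> S \<subseteq> A" "dim A \<le> k"
    and "\<forall>\<G>\<subseteq>\<F>. card \<G> \<le> k + 1 \<longrightarrow> \<Inter>\<G> \<noteq> {}"
  shows "\<Inter>\<F> \<noteq> {}"
  using assms
proof (induction "card \<F>" arbitrary: \<F> rule: less_induct)
  case less
  show ?case
  proof (cases "card \<F> \<le> k + 1")
    case True
    then show ?thesis using less.prems(4) by blast
  next
    case False
    have "\<Inter>(\<F> - {S}) \<noteq> {}" if "S \<in> \<F>" for S
    proof -
      have "card (\<F> - {S}) < card \<F>" using less.prems(1) that by (rule card_Diff1_less)
      moreover have "finite (\<F> - {S})" using less.prems(1) by simp
      moreover have "\<forall>T\<in>\<F> - {S}. convex T \<and> T \<subseteq> A" using less.prems(2) by blast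
      moreover have "\<forall>\<G>\<subseteq>\<F> - {S}. card \<G> \<le> k + 1 \<longrightarrow> \<Inter>\<G> \<noteq> {}"
        using less.prems(4) by blast
      ultimately show ?thesis using less.hyps less.prems(3) by blast
    qed
    moreover have "card \<F> \<ge> k + 2" using False by simp
    ultimately show ?thesis using Helly_step less.prems(1-3) by blast
  qed
qed

subsection \<open>A polytope of dimension \<open>k\<close> has a translate inside its \<open>k\<close>-fold reflection\<close>

lemma dilated_average_witness:
  fixes U :: "'a::real_vector set"
  assumes "finite U" "U \<noteq> {}" "card U \<le> k + 1" "1 \<le> k" "p \<in> U"
  shows "(real (k + 1) / real (card U)) *\<^sub>R (\<Sum>U) \<in> (+) p ` (scaleR (real k) ` (convex hull U))"
proof -
  define m where "m = real (card U)"
  have m: "1 \<le> m" "m \<le> real k + 1" using assms(1-3) by (auto simp: m_def Suc_leI card_gt_0_iff)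
  have k: "real k > 0" using assms(4) by simp
  \<comment> \<open>Convex coefficients exhibiting \<open>((k + 1)/m \<Sum>U - p)/k\<close> as a point of \<open>conv U\<close>.\<close>
  define a where "a j = (real k + 1) / (m * real k) - (if j = p then 1 / real k else 0)" for j
  have "(\<Sum>j\<in>U. a j *\<^sub>R j) = ((real k + 1) / (m * real k)) *\<^sub>R (\<Sum>U) - (1 / real k) *\<^sub>R p"
    using assms(1,5)
    by (simp add: a_def scaleR_left_diff_distrib sum_subtractf scaleR_sum_right
        if_distrib[of "\<lambda>t. t *\<^sub>R _"] cong: if_cong)
  also have "\<dots> = (1 / real k) *\<^sub>R ((real (k + 1) / m) *\<^sub>R (\<Sum>U) - p)"
    using k m by (simp add: scaleR_right_diff_distrib mult.commute add.commute)
  finally have sum_eq: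
    "(\<Sum>j\<in>U. a j *\<^sub>R j) = (1 / real k) *\<^sub>R ((real (k + 1) / m) *\<^sub>R (\<Sum>U) - p)" .
  have "(\<Sum>j\<in>U. a j *\<^sub>R j) \<in> convex hull U"
  proof (rule convex_sum[OF assms(1) convex_convex_hull])
    have "(\<Sum>j\<in>U. a j) = m * ((real k + 1) / (m * real k)) - 1 / real k"
      using assms(1,5) by (simp add: a_def sum_subtractf m_def)
    also have "\<dots> = 1" using k m by (simp add: field_simps)
    finally show "(\<Sum>j\<in>U. a j) = 1" .
    show "0 \<le> a j" for j
      using k m by (simp add: a_def field_simps)
    show "j \<in> convex hull U" if "j \<in> U" for j
      using that by (rule hull_inc)
  qed
  then have "real k *\<^sub>R (\<Sum>j\<in>U. a j *\<^sub>R j) \<in> scaleR (real k) ` (convex hull U)"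
    by (rule imageI)
  moreover have "(real (k + 1) / m) *\<^sub>R (\<Sum>U) = p + real k *\<^sub>R (\<Sum>j\<in>U. a j *\<^sub>R j)"
    using sum_eq k by simp
  ultimately show ?thesis unfolding m_def by (rule image_eqI[rotated])
qed

lemma dilated_copies_meet:
  fixes S :: "'a::real_vector set"
  assumes "U \<subseteq> S" "finite U" "U \<noteq> {}" "card U \<le> k + 1" "1 \<le> k"
  shows "\<exists>y\<in>span S. \<forall>p\<in>U. y \<in> (+) p ` (scaleR (real k) ` (convex hull S))"
proof -
  define y where "y = (real (k + 1) / real (card U)) *\<^sub>R (\<Sum>U)"
  have "\<Sum>U \<in> span S" using assms(1) by (intro span_sum span_base) auto
  then have "y \<in> span S" unfolding y_def by (rule span_scale)
  moreover have "y \<in> (+) p ` (scaleR (real k) ` (convex hull S))" if p: "p \<in> U" for p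
  proof -
    have "y \<in> (+) p ` (scaleR (real k) ` (convex hull U))"
      unfolding y_def by (rule dilated_average_witness[OF assms(2-5) p])
    moreover have "(+) p ` (scaleR (real k) ` (convex hull U))
                     \<subseteq> (+) p ` (scaleR (real k) ` (convex hull S))"
      using assms(1) by (intro image_mono hull_mono)
    ultimately show ?thesis by blast
  qed
  ultimately show ?thesis by blast
qed

lemma convex_reflection:
  fixes M :: "'a::real_vector set"
  assumes "convex M"
  shows "convex {x. y - x \<in> M}"
proof -
  have "x \<in> (+) y ` (uminus ` M) \<longleftrightarrow> y - x \<in> M" for x
  proof
    assume "x \<in> (+) y ` (uminus ` M)"
    then obtain m where "m \<in> M" "x = y + - m" by blast
    then show "y - x \<in> M" by simp
  next
    assume "y - x \<in> M"
    then have "- (y - x) \<in> uminus ` M" by (rule imageI)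
    then show "x \<in> (+) y ` (uminus ` M)" by (rule image_eqI[rotated]) simp
  qed
  then have "{x. y - x \<in> M} = (+) y ` (uminus ` M)" by blast
  then show ?thesis using assms by (simp add: convex_translation convex_negations)
qed

lemma translate_in_neg_dilate_from_vertices:
  fixes S :: "'a::real_vector set"
  assumes "\<And>p. p \<in> S \<Longrightarrow> y - p \<in> scaleR c ` (convex hull S)"
  shows "(\<lambda>x. x + - y) ` (convex hull S) \<subseteq> scaleR c ` (uminus ` (convex hull S))"
proof (rule image_subsetI)
  fix x assume x: "x \<in> convex hull S"
  have "convex hull S \<subseteq> {x. y - x \<in> scaleR c ` (convex hull S)}"
    using assms by (intro hull_minimal) (auto simp: convex_reflection convex_scaling)
  then obtain z where z: "z \<in> convex hull S" "y - x = c *\<^sub>R z"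
    using x by blast
  then have "x + - y = c *\<^sub>R (- z)" by (simp add: algebra_simps)
  then show "x + - y \<in> scaleR c ` (uminus ` (convex hull S))" using z(1) by blast
qed

lemma polytope_translate_in_neg_dilate:
  fixes S :: "'a::euclidean_space set"
  assumes "finite S" "dim S \<le> k" "1 \<le> k"
  shows "\<exists>w. (\<lambda>x. x + w) ` (convex hull S) \<subseteq> scaleR (real k) ` (uminus ` (convex hull S))"
proof -
  define C where "C p = span S \<inter> (+) p ` (scaleR (real k) ` (convex hull S))" for p
  have "\<Inter>(C ` S) \<noteq> {}"
  proof (rule Helly_subspace[where A = "span S" and k = k])
    show "finite (C ` S)" using assms(1) by simp
    show "\<forall>T\<in>C ` S. convex T \<and> T \<subseteq> span S"
      unfolding C_def
      by (auto intro!: convex_Int convex_translation convex_scaling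
          subspace_imp_convex[OF subspace_span])
    show "dim (span S) \<le> k" using assms(2) by simp
    show "\<forall>\<G>\<subseteq>C ` S. card \<G> \<le> k + 1 \<longrightarrow> \<Inter>\<G> \<noteq> {}"
    proof (intro allI impI)
      fix \<G> assume G: "\<G> \<subseteq> C ` S" "card \<G> \<le> k + 1"
      then obtain U where U: "U \<subseteq> S" "inj_on C U" "\<G> = C ` U"
        by (auto simp: subset_image_inj)
      have fin: "finite U" using U(1) assms(1) finite_subset by blast
      have card: "card U \<le> k + 1" using G(2) U by (simp add: card_image)
      show "\<Inter>\<G> \<noteq> {}"
      proof (cases "U = {}")
        case True
        then show ?thesis using U(3) by simp
      next
        case False
        then obtain y where "y \<in> span S" "\<forall>p\<in>U. y \<in> (+) p ` (scaleR (real k) ` (convex hull S))"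
          using dilated_copies_meet[OF U(1) fin _ card assms(3)] by blast
        then show ?thesis using U(3) unfolding C_def by blast
      qed
    qed
  qed
  then obtain y where y: "\<And>p. p \<in> S \<Longrightarrow> y \<in> C p" by blast
  have "y - p \<in> scaleR (real k) ` (convex hull S)" if p: "p \<in> S" for p
  proof -
    obtain z where "z \<in> scaleR (real k) ` (convex hull S)" "y = p + z"
      using y[OF p] unfolding C_def by blast
    then show ?thesis by simp
  qed
  then have "(\<lambda>x. x + - y) ` (convex hull S) \<subseteq> scaleR (real k) ` (uminus ` (convex hull S))"
    by (rule translate_in_neg_dilate_from_vertices)
  then show ?thesis by (rule exI)
qed

subsection \<open>An equilateral simplex needs an \<open>(N - 1)\<close>-fold reflection to contain a translate\<close>

definition vertex_centroid :: "'a::real_vector set \<Rightarrow> 'a" where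
  "vertex_centroid V = (1 / real (card V)) *\<^sub>R (\<Sum>V)"

lemma sum_diff_vertex_centroid:
  fixes V :: "'a::real_vector set"
  assumes "finite V" "V \<noteq> {}"
  shows "(\<Sum>u\<in>V. u - vertex_centroid V) = 0"
proof -
  have "card V \<noteq> 0" using assms by simp
  then show ?thesis by (simp add: vertex_centroid_def sum_subtractf sum_constant_scaleR)
qed

text \<open>Polarization: inner products of equidistant points are determined by their norms.\<close>

lemma equilateral_inner:
  fixes V :: "'a::real_inner set"
  assumes dst: "\<forall>a\<in>V. \<forall>b\<in>V. a \<noteq> b \<longrightarrow> dist a b = r" and "a \<in> V" "b \<in> V"
  shows "a \<bullet> b = (a \<bullet> a + b \<bullet> b - (if a = b then 0 else r\<^sup>2)) / 2"
proof (cases "a = b")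
  case True
  then show ?thesis by simp
next
  case False
  then have "(a - b) \<bullet> (a - b) = r\<^sup>2"
    using assms by (metis dist_norm power2_norm_eq_inner)
  then show ?thesis using False
    by (simp add: inner_diff_left inner_diff_right inner_commute[of b a] algebra_simps)
qed

lemma equilateral_inner_centroid:
  fixes V :: "'a::real_inner set"
  assumes fin: "finite V" and ne: "V \<noteq> {}"
    and dst: "\<forall>a\<in>V. \<forall>b\<in>V. a \<noteq> b \<longrightarrow> dist a b = r" and a: "a \<in> V"
  defines "N \<equiv> real (card V)" and "Q \<equiv> \<Sum>b\<in>V. b \<bullet> b"
  shows "a \<bullet> vertex_centroid V = (N * (a \<bullet> a) + Q - (N - 1) * r\<^sup>2) / (2 * N)"
proof -
  have N: "N > 0" using fin ne by (simp add: N_def card_gt_0_iff)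
  have "(\<Sum>b\<in>V. (if a = b then 0 else r\<^sup>2)) = (\<Sum>b\<in>V. r\<^sup>2 - (if a = b then r\<^sup>2 else 0))"
    by (rule sum.cong) auto
  also have "\<dots> = (N - 1) * r\<^sup>2"
    using fin a by (simp add: sum_subtractf N_def algebra_simps)
  finally have row: "(\<Sum>b\<in>V. (if a = b then 0 else r\<^sup>2)) = (N - 1) * r\<^sup>2" .
  have "a \<bullet> vertex_centroid V = (1 / N) * (\<Sum>b\<in>V. a \<bullet> b)"
    by (simp add: vertex_centroid_def N_def inner_sum_right)
  also have "(\<Sum>b\<in>V. a \<bullet> b) = (\<Sum>b\<in>V. (a \<bullet> a + b \<bullet> b - (if a = b then 0 else r\<^sup>2)) / 2)"
    by (rule sum.cong) (use equilateral_inner[OF dst a] in auto)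
  also have "\<dots> = (N * (a \<bullet> a) + Q - (N - 1) * r\<^sup>2) / 2"
    using row by (simp add: sum_divide_distrib[symmetric] sum.distrib sum_subtractf Q_def N_def)
  finally show ?thesis using N by simp
qed

lemma equilateral_gram:
  fixes V :: "'a::real_inner set"
  assumes fin: "finite V" and ne: "V \<noteq> {}"
    and dst: "\<forall>a\<in>V. \<forall>b\<in>V. a \<noteq> b \<longrightarrow> dist a b = r"
    and uv: "u \<in> V" "v \<in> V"
  shows "(u - vertex_centroid V) \<bullet> (v - vertex_centroid V)
           = (if u = v then (real (card V) - 1) * r\<^sup>2 / (2 * real (card V))
              else - (r\<^sup>2 / (2 * real (card V))))"
proof -
  define N where "N = real (card V)"
  define g where "g = vertex_centroid V"
  define Q where "Q = (\<Sum>b\<in>V. b \<bullet> b)"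
  note ag = equilateral_inner_centroid[OF fin ne dst, folded N_def Q_def g_def]
  have N: "N > 0" using fin ne by (simp add: N_def card_gt_0_iff)
  have "g \<bullet> g = ((1 / N) *\<^sub>R (\<Sum>V)) \<bullet> g"
    unfolding N_def by (subst (1) g_def) (simp only: vertex_centroid_def)
  also have "\<dots> = (1 / N) * (\<Sum>a\<in>V. a \<bullet> g)"
    by (simp only: inner_scaleR_left inner_sum_left)
  also have "(\<Sum>a\<in>V. a \<bullet> g) = (\<Sum>a\<in>V. (N * (a \<bullet> a) + Q - (N - 1) * r\<^sup>2) / (2 * N))"
    by (rule sum.cong) (use ag in auto)
  also have "\<dots> = (N * Q + N * Q - N * ((N - 1) * r\<^sup>2)) / (2 * N)"
    by (simp add: sum_divide_distrib[symmetric] sum.distrib sum_subtractf Q_def sum_distrib_left N_def)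
  finally have gg: "g \<bullet> g = (2 * N * Q - N * (N - 1) * r\<^sup>2) / (2 * N * N)"
    using N by (simp add: field_simps)
  have "(u - g) \<bullet> (v - g) = u \<bullet> v - u \<bullet> g - v \<bullet> g + g \<bullet> g"
    by (simp add: inner_diff_left inner_diff_right inner_commute[of g v])
  also have "\<dots> = (if u = v then (N - 1) * r\<^sup>2 / (2 * N) else - (r\<^sup>2 / (2 * N)))"
    using N uv by (simp add: equilateral_inner[OF dst uv] ag gg field_simps; simp add: algebra_simps)
  finally show ?thesis unfolding g_def N_def .
qed

text \<open>On the convex hull, the functional \<open>x \<mapsto> (x - g) \<bullet> (u - g)\<close> is bounded below by its
value \<open>-r\<^sup>2/(2N)\<close> at the vertices other than \<open>u\<close>.\<close>

lemma equilateral_hull_inner_lower_bound: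
  fixes V :: "'a::real_inner set"
  assumes fin: "finite V" and ne: "V \<noteq> {}"
    and dst: "\<forall>a\<in>V. \<forall>b\<in>V. a \<noteq> b \<longrightarrow> dist a b = r"
    and x: "x \<in> convex hull V" and u: "u \<in> V"
  shows "- (r\<^sup>2 / (2 * real (card V))) \<le> (x - vertex_centroid V) \<bullet> (u - vertex_centroid V)"
proof -
  define g where "g = vertex_centroid V"
  define c where "c = - (r\<^sup>2 / (2 * real (card V)))"
  define H where "H = {z. c \<le> (z - g) \<bullet> (u - g)}"
  have "H = {z. (u - g) \<bullet> z \<ge> c + g \<bullet> (u - g)}"
    by (auto simp: H_def inner_diff_left inner_commute)
  then have "convex H" by (simp add: convex_halfspace_ge)
  moreover have "V \<subseteq> H"
  proof
    fix v assume v: "v \<in> V"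
    have "0 \<le> (real (card V) - 1) * r\<^sup>2 / (2 * real (card V))"
      using fin ne by (simp add: Suc_leI card_gt_0_iff)
    moreover have "c \<le> 0" by (simp add: c_def)
    moreover have "(v - g) \<bullet> (u - g)
        = (if v = u then (real (card V) - 1) * r\<^sup>2 / (2 * real (card V)) else c)"
      using equilateral_gram[OF fin ne dst v u] unfolding c_def g_def .
    ultimately have "c \<le> (v - g) \<bullet> (u - g)" by auto
    then show "v \<in> H" unfolding H_def by simp
  qed
  ultimately have "convex hull V \<subseteq> H" by (rule hull_minimal[rotated])
  then show ?thesis using x unfolding H_def c_def g_def by blast
qed

lemma equilateral_translate_in_neg_dilate_bound:
  fixes V :: "'a::real_inner set"
  assumes fin: "finite V" and ne: "V \<noteq> {}" and r: "r > 0"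
    and dst: "\<forall>a\<in>V. \<forall>b\<in>V. a \<noteq> b \<longrightarrow> dist a b = r"
    and l: "l > 0"
    and incl: "(\<lambda>x. x + w) ` (convex hull V) \<subseteq> scaleR l ` (uminus ` (convex hull V))"
  shows "real (card V) - 1 \<le> l"
proof -
  define N where "N = real (card V)"
  define g where "g = vertex_centroid V"
  define w' where "w' = w + (1 + l) *\<^sub>R g"
  have N: "N > 0" using fin ne by (simp add: N_def card_gt_0_iff)
  \<comment> \<open>Each translated vertex is a point of the dilated reflected simplex; testing it against the
      direction of that vertex bounds its squared distance to the centroid.\<close>
  have vertex_bound: "(u - g) \<bullet> (u - g) + w' \<bullet> (u - g) \<le> l * (r\<^sup>2 / (2 * N))" if u: "u \<in> V" for u
  proof -
    have "u + w \<in> scaleR l ` (uminus ` (convex hull V))"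
      using incl u by (blast intro: hull_inc)
    then obtain x where x: "x \<in> convex hull V" "u + w = l *\<^sub>R (- x)" by blast
    have "l *\<^sub>R x = - (u + w)" by (simp add: x(2))
    then have "l *\<^sub>R (x - g) = - ((u - g) + w')"
      unfolding w'_def scaleR_right_diff_distrib by (simp add: algebra_simps)
    then have "l * ((x - g) \<bullet> (u - g)) = - ((u - g) \<bullet> (u - g) + w' \<bullet> (u - g))"
      by (metis inner_scaleR_left inner_minus_left inner_add_left)
    moreover have "l * (- (r\<^sup>2 / (2 * N))) \<le> l * ((x - g) \<bullet> (u - g))"
      using equilateral_hull_inner_lower_bound[OF fin ne dst x(1) u] l
      unfolding N_def g_def by (intro mult_left_mono) simp_all
    ultimately show ?thesis by simp
  qed
  \<comment> \<open>Summing over all vertices, the linear terms cancel at the centroid.\<close>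
  have "(\<Sum>u\<in>V. (u - g) \<bullet> (u - g) + w' \<bullet> (u - g))
          = (\<Sum>u\<in>V. (u - g) \<bullet> (u - g)) + w' \<bullet> (\<Sum>u\<in>V. u - g)"
    by (simp add: sum.distrib inner_sum_right)
  also have "\<dots> = N * ((N - 1) * r\<^sup>2 / (2 * N))"
    using equilateral_gram[OF fin ne dst] sum_diff_vertex_centroid[OF fin ne]
    by (simp add: N_def g_def)
  finally have "N * ((N - 1) * r\<^sup>2 / (2 * N)) = (\<Sum>u\<in>V. (u - g) \<bullet> (u - g) + w' \<bullet> (u - g))" ..
  also have "\<dots> \<le> (\<Sum>u\<in>V. l * (r\<^sup>2 / (2 * N)))"
    by (rule sum_mono) (rule vertex_bound)
  also have "\<dots> = N * (l * (r\<^sup>2 / (2 * N)))" by (simp add: N_def)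
  finally have "N * ((N - 1) * r\<^sup>2 / (2 * N)) \<le> N * (l * (r\<^sup>2 / (2 * N)))" .
  moreover have "N * ((N - 1) * r\<^sup>2 / (2 * N)) = (N - 1) * r\<^sup>2 / 2" using N by simp
  moreover have "N * (l * (r\<^sup>2 / (2 * N))) = l * r\<^sup>2 / 2" using N by simp
  ultimately have "(N - 1) * r\<^sup>2 \<le> l * r\<^sup>2" by simp
  then show ?thesis using r unfolding N_def by simp
qed

lemma linear_image_scaled_reflection:
  assumes "linear f"
  shows "f ` (scaleR c ` (uminus ` S)) = scaleR c ` (uminus ` (f ` S))"
  by (simp add: image_image linear_cmul[OF assms] linear_neg[OF assms])

lemma projection_translate_in_neg_dilate:
  fixes V :: "'a::euclidean_space set"
  assumes "finite V" "subspace \<xi>" "dim \<xi> \<le> k" "1 \<le> k"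
  shows "\<exists>w. (\<lambda>x. x + w) ` (orth_proj \<xi> ` (convex hull V))
               \<subseteq> orth_proj \<xi> ` (scaleR (real k) ` (uminus ` (convex hull V)))"
proof -
  have lin: "linear (orth_proj \<xi>)" using assms(2) by (rule orth_proj_linear)
  have "orth_proj \<xi> ` V \<subseteq> \<xi>" using orth_proj_spec(1)[OF assms(2)] by blast
  then have "dim (orth_proj \<xi> ` V) \<le> k" using dim_subset assms(3) by (meson order_trans)
  then show ?thesis
    using polytope_translate_in_neg_dilate[of "orth_proj \<xi> ` V" k] assms(1,4)
    by (simp add: convex_hull_linear_image[OF lin] linear_image_scaled_reflection[OF lin])
qed

theorem mainTheorem9:
  fixes T :: "(real^'n) set" and d :: nat
  assumes "CARD('n) \<ge> 2" and "1 \<le> d" and "d \<le> CARD('n) - 1"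
    and "regular_simplex T"
  shows "(\<forall>\<xi>. subspace \<xi> \<and> dim \<xi> = CARD('n) - d \<longrightarrow>
            (\<exists>w. (\<lambda>x. x + w) ` (orth_proj \<xi> ` T)
                  \<subseteq> orth_proj \<xi> ` (scaleR (real (CARD('n) - d)) ` (uminus ` T))))
       \<and> (\<forall>c::real. 0 < c \<and> c < real CARD('n) / real (CARD('n) - d) \<longrightarrow>
            \<not> (\<exists>w. (\<lambda>x. x + w) ` T
                  \<subseteq> scaleR c ` (scaleR (real (CARD('n) - d)) ` (uminus ` T))))"
proof -
  obtain V r where V: "finite V" "card V = CARD('n) + 1" "r > 0"
      "\<forall>u\<in>V. \<forall>v\<in>V. u \<noteq> v \<longrightarrow> dist u v = r" "T = convex hull V"
    using assms(4) unfolding regular_simplex_def by auto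
  define k where "k = CARD('n) - d"
  have k: "1 \<le> k" using assms(1-3) unfolding k_def by linarith
  have no_smaller: "\<not> (\<exists>w. (\<lambda>x. x + w) ` T \<subseteq> scaleR c ` (scaleR (real k) ` (uminus ` T)))"
    if c: "0 < c" "c < real CARD('n) / real k" for c
  proof
    assume "\<exists>w. (\<lambda>x. x + w) ` T \<subseteq> scaleR c ` (scaleR (real k) ` (uminus ` T))"
    then obtain w where incl: "(\<lambda>x. x + w) ` (convex hull V)
                                 \<subseteq> scaleR (c * real k) ` (uminus ` (convex hull V))"
      by (auto simp: V(5) image_image)
    have "real (card V) - 1 \<le> c * real k"
      using V(2) c k by (intro equilateral_translate_in_neg_dilate_bound[OF V(1) _ V(3,4) _ incl]) auto
    then show False using V(2) c k by (simp add: field_simps)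
  qed
  have "\<forall>\<xi>. subspace \<xi> \<and> dim \<xi> = k \<longrightarrow> (\<exists>w. (\<lambda>x. x + w) ` (orth_proj \<xi> ` T)
                     \<subseteq> orth_proj \<xi> ` (scaleR (real k) ` (uminus ` T)))"
    using projection_translate_in_neg_dilate[OF V(1) _ _ k] unfolding V(5) by simp
  then show ?thesis using no_smaller unfolding k_def by blast
qed

end
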